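(* Let $(X,\mathcal{E})$ be an unbounded discrete ballean. The following conditions are equivalent: (1) $(X,\mathcal{E})$ is ultradiscrete; (2) $(X,\mathcal{E})$ is extremely normal; (3) $(X,\mathcal{E})$ is ultranormal; (4) $(X,\mathcal{E})$ is maximal and irresolvable.
   Context: A ballean $(X,\mathcal{E})$ is a set with a coarse structure (a family of subsets of $X\times X$ each containing the diagonal, closed under composition, inverses, and taking subsets containing the diagonal, and covering every pair of points). $E[x]=\{y:(x,y)\in E\}$, $E[A]=\bigcup_{a\in A}E[a]$. $Y$ is bounded if $Y\subseteq E[x]$ for some $x$ and $E\in\mathcal{E}$; $\mathcal{B}_X$ denotes the family of bounded sets. $A$ is large if $X=E[A]$ for some $E\in\mathcal{E}$. Subsets $Y,Z$ are asymptotically disjoint if $E[Y]\cap E[Z]$ is bounded for every $E\in\mathcal{E}$. An unbounded ballean is ultranormal if no two unbounded subsets are asymptotically disjoint; extremely normal if every unbounded subset is large; maximal if $X$ is bounded with respect to every coarse structure strictly containing $\mathcal{E}$; irresolvable if $X$ cannot be partitioned into two large subsets. The ballean is discrete if for every $E\in\mathcal{E}$ there is a bounded $B$ with $E[x]=\{x\}$ for all $x\in X\setminus B$. An unbounded discrete ballean is ultradiscrete if $\{X\setminus B: B\in\mathcal{B}_X\}$ is an ultrafilter on $X$. *)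

theory Defs
  imports Main
begin

definition coarse_structure :: "'a set \<Rightarrow> ('a \<times> 'a) set set \<Rightarrow> bool" where
  "coarse_structure X Es \<longleftrightarrow>
     (\<forall>E\<in>Es. Id_on X \<subseteq> E \<and> E \<subseteq> X \<times> X) \<and>
     (\<forall>E\<in>Es. \<forall>F\<in>Es. E O F \<in> Es) \<and>
     (\<forall>E\<in>Es. E\<inverse> \<in> Es) \<and>
     (\<forall>E\<in>Es. \<forall>F. Id_on X \<subseteq> F \<and> F \<subseteq> E \<longrightarrow> F \<in> Es) \<and>
     \<Union>Es = X \<times> X"

definition bounded_in :: "'a set \<Rightarrow> ('a \<times> 'a) set set \<Rightarrow> 'a set \<Rightarrow> bool" where
  "bounded_in X Es Y \<longleftrightarrow> (\<exists>x\<in>X. \<exists>E\<in>Es. Y \<subseteq> E `` {x})"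

definition large_in :: "'a set \<Rightarrow> ('a \<times> 'a) set set \<Rightarrow> 'a set \<Rightarrow> bool" where
  "large_in X Es A \<longleftrightarrow> A \<subseteq> X \<and> (\<exists>E\<in>Es. X = E `` A)"

definition asymp_disjoint :: "'a set \<Rightarrow> ('a \<times> 'a) set set \<Rightarrow> 'a set \<Rightarrow> 'a set \<Rightarrow> bool" where
  "asymp_disjoint X Es Y Z \<longleftrightarrow> (\<forall>E\<in>Es. bounded_in X Es (E `` Y \<inter> E `` Z))"

definition unbounded_ballean :: "'a set \<Rightarrow> ('a \<times> 'a) set set \<Rightarrow> bool" where
  "unbounded_ballean X Es \<longleftrightarrow> \<not> bounded_in X Es X"

definition ultranormal :: "'a set \<Rightarrow> ('a \<times> 'a) set set \<Rightarrow> bool" where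
  "ultranormal X Es \<longleftrightarrow> unbounded_ballean X Es \<and>
     (\<forall>Y Z. Y \<subseteq> X \<and> Z \<subseteq> X \<and> \<not> bounded_in X Es Y \<and> \<not> bounded_in X Es Z
        \<longrightarrow> \<not> asymp_disjoint X Es Y Z)"

definition extremely_normal :: "'a set \<Rightarrow> ('a \<times> 'a) set set \<Rightarrow> bool" where
  "extremely_normal X Es \<longleftrightarrow> unbounded_ballean X Es \<and>
     (\<forall>Y. Y \<subseteq> X \<and> \<not> bounded_in X Es Y \<longrightarrow> large_in X Es Y)"

definition maximal_ballean :: "'a set \<Rightarrow> ('a \<times> 'a) set set \<Rightarrow> bool" where
  "maximal_ballean X Es \<longleftrightarrow>
     (\<forall>Es'. coarse_structure X Es' \<and> Es \<subset> Es' \<longrightarrow> bounded_in X Es' X)"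

definition irresolvable :: "'a set \<Rightarrow> ('a \<times> 'a) set set \<Rightarrow> bool" where
  "irresolvable X Es \<longleftrightarrow>
     \<not> (\<exists>A B. A \<inter> B = {} \<and> A \<union> B = X \<and> large_in X Es A \<and> large_in X Es B)"

definition discrete_ballean :: "'a set \<Rightarrow> ('a \<times> 'a) set set \<Rightarrow> bool" where
  "discrete_ballean X Es \<longleftrightarrow>
     (\<forall>E\<in>Es. \<exists>B. bounded_in X Es B \<and> (\<forall>x\<in>X - B. E `` {x} = {x}))"

definition ultrafilter_on :: "'a set \<Rightarrow> 'a set set \<Rightarrow> bool" where
  "ultrafilter_on X F \<longleftrightarrow>
     F \<subseteq> Pow X \<and> X \<in> F \<and> {} \<notin> F \<and>
     (\<forall>A\<in>F. \<forall>B\<in>F. A \<inter> B \<in> F) \<and>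
     (\<forall>A\<in>F. \<forall>B. A \<subseteq> B \<and> B \<subseteq> X \<longrightarrow> B \<in> F) \<and>
     (\<forall>A. A \<subseteq> X \<longrightarrow> A \<in> F \<or> X - A \<in> F)"

definition ultradiscrete :: "'a set \<Rightarrow> ('a \<times> 'a) set set \<Rightarrow> bool" where
  "ultradiscrete X Es \<longleftrightarrow> unbounded_ballean X Es \<and> discrete_ballean X Es \<and>
     ultrafilter_on X {X - B | B. bounded_in X Es B}"

end

theory Submission
  imports Defs
begin

text \<open>In a discrete ballean every entourage lies inside \<open>Id_on X \<union> C \<times> C\<close> for a bounded \<open>C\<close>.
  Consequently a nonempty set is large iff its complement is bounded, and every set is
  asymptotically disjoint from its complement. So being ultradiscrete, extremely normal or
  ultranormal each amounts to the dichotomy "every subset is bounded or has bounded complement",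
  and irresolvability holds outright. Maximality is equivalent to the dichotomy too: if \<open>S\<close> and
  \<open>X - S\<close> are both unbounded, the boxes over sets meeting \<open>X - S\<close> boundedly form a strictly larger
  coarse structure in which \<open>X\<close> stays unbounded; conversely, under the dichotomy a strictly larger
  structure with \<open>X\<close> unbounded has the same bounded sets, and for a new entourage \<open>F\<close> the points
  moved by \<open>F O F\<inverse>\<close> split (by Zorn's lemma) into two halves dominating each other, one of
  which is bounded, which forces \<open>F\<close> into the old structure.\<close>

definition displaced :: "('a \<times> 'a) set \<Rightarrow> 'a set" where
  "displaced E = {x. \<exists>y. (x, y) \<in> E \<and> y \<noteq> x}"

definition bounded_or_cobounded :: "'a set \<Rightarrow> ('a \<times> 'a) set set \<Rightarrow> bool" where
  "bounded_or_cobounded X Es \<longleftrightarrow> (\<forall>S\<subseteq>X. bounded_in X Es S \<or> bounded_in X Es (X - S))"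

definition ideal_on :: "'a set \<Rightarrow> 'a set set \<Rightarrow> bool" where
  "ideal_on X I \<longleftrightarrow> I \<subseteq> Pow X \<and> (\<forall>x\<in>X. {x} \<in> I) \<and>
     (\<forall>A\<in>I. \<forall>B\<in>I. A \<union> B \<in> I) \<and> (\<forall>A\<in>I. \<forall>B. B \<subseteq> A \<longrightarrow> B \<in> I)"

definition box_structure :: "'a set \<Rightarrow> 'a set set \<Rightarrow> ('a \<times> 'a) set set" where
  "box_structure X I = {E. Id_on X \<subseteq> E \<and> (\<exists>C\<in>I. E \<subseteq> Id_on X \<union> C \<times> C)}"

lemma subset_Id_on_Un_displaced:
  assumes "E \<subseteq> X \<times> X"
  shows "E \<subseteq> Id_on X \<union> (displaced E \<union> E `` displaced E) \<times> (displaced E \<union> E `` displaced E)"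
  using assms by (auto simp: displaced_def)

lemma bounded_in_subset: "bounded_in X Es Y \<Longrightarrow> Z \<subseteq> Y \<Longrightarrow> bounded_in X Es Z"
  unfolding bounded_in_def by blast

lemma bounded_or_cobounded_nonempty: "bounded_or_cobounded X Es \<Longrightarrow> X \<noteq> {}"
  unfolding bounded_or_cobounded_def bounded_in_def by blast

lemma sym_displaced_mutually_dominating_split:
  assumes "sym G"
  obtains I where "I \<subseteq> displaced G" "displaced G - I \<subseteq> G `` I" "I \<subseteq> G `` (displaced G - I)"
proof -
  define independent where "independent = {I. I \<subseteq> displaced G \<and> pairwise (\<lambda>x y. (x, y) \<notin> G) I}"
  have "\<Union>C \<in> independent" if "C \<in> chains independent" for C
    using that pairwise_chain_Union[of C "\<lambda>x y. (x, y) \<notin> G"]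
    unfolding chains_def independent_def by blast
  then obtain I where I: "I \<in> independent" and maximal: "\<And>J. J \<in> independent \<Longrightarrow> I \<subseteq> J \<Longrightarrow> J = I"
    using Zorn_Lemma[of independent] by blast
  have "displaced G - I \<subseteq> G `` I"
  proof
    fix x assume x: "x \<in> displaced G - I"
    show "x \<in> G `` I"
    proof (rule ccontr)
      assume "x \<notin> G `` I"
      then have "\<forall>y\<in>I. (y, x) \<notin> G \<and> (x, y) \<notin> G"
        using assms unfolding sym_def by blast
      then have "insert x I \<in> independent"
        using I x unfolding independent_def by (auto simp: pairwise_insert)
      then show False using maximal x by blast
    qed
  qed
  moreover have "I \<subseteq> G `` (displaced G - I)"
  proof
    fix x assume "x \<in> I"
    then obtain y where "(x, y) \<in> G" "y \<noteq> x"
      using I unfolding independent_def displaced_def by blast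
    moreover from this have "(y, x) \<in> G" using assms unfolding sym_def by blast
    ultimately show "x \<in> G `` (displaced G - I)"
      using I \<open>x \<in> I\<close> unfolding independent_def displaced_def pairwise_def by blast
  qed
  ultimately show thesis using I that unfolding independent_def by blast
qed

lemma coarse_structure_box_structure:
  assumes "ideal_on X I"
  shows "coarse_structure X (box_structure X I)"
proof -
  have I: "\<And>C. C \<in> I \<Longrightarrow> C \<subseteq> X" "\<And>x. x \<in> X \<Longrightarrow> {x} \<in> I"
    "\<And>A B. A \<in> I \<Longrightarrow> B \<in> I \<Longrightarrow> A \<union> B \<in> I"
    using assms unfolding ideal_on_def by auto
  have box_iff: "E \<in> box_structure X I \<longleftrightarrow> Id_on X \<subseteq> E \<and> (\<exists>C\<in>I. E \<subseteq> Id_on X \<union> C \<times> C)" for E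
    unfolding box_structure_def by simp
  have relcomp: "E O F \<in> box_structure X I"
    if E: "E \<in> box_structure X I" and F: "F \<in> box_structure X I" for E F
  proof -
    obtain C D where CD: "C \<in> I" "D \<in> I" "E \<subseteq> Id_on X \<union> C \<times> C" "F \<subseteq> Id_on X \<union> D \<times> D"
      "Id_on X \<subseteq> E" "Id_on X \<subseteq> F"
      using E F unfolding box_iff by blast
    moreover have "C \<union> D \<in> I" using I(3) CD(1,2) .
    ultimately show ?thesis unfolding box_iff by (intro conjI bexI[of _ "C \<union> D"]) blast+
  qed
  have space: "E \<subseteq> X \<times> X" if "E \<in> box_structure X I" for E
    using that I(1) unfolding box_iff by blast
  have "Id_on X \<union> ({a} \<union> {b}) \<times> ({a} \<union> {b}) \<in> box_structure X I"
    if "a \<in> X" "b \<in> X" for a b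
    unfolding box_iff using I(3)[OF I(2)[OF that(1)] I(2)[OF that(2)]] by blast
  then have "X \<times> X \<subseteq> \<Union>(box_structure X I)" by blast
  with space have cover: "\<Union>(box_structure X I) = X \<times> X" by blast
  show ?thesis
    unfolding coarse_structure_def
  proof (intro conjI ballI allI impI)
    show "Id_on X \<subseteq> E" if "E \<in> box_structure X I" for E
      using that unfolding box_iff by blast
    show "E\<inverse> \<in> box_structure X I" if "E \<in> box_structure X I" for E
      using that unfolding box_iff by blast
    show "F \<in> box_structure X I" if "E \<in> box_structure X I" "Id_on X \<subseteq> F \<and> F \<subseteq> E" for E F
      using that unfolding box_iff by blast
  qed (fact relcomp space cover)+
qed

lemma bounded_in_box_structure_space:
  assumes "bounded_in X (box_structure X I) X"
  obtains x C where "x \<in> X" "C \<in> I" "X \<subseteq> insert x C"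
proof -
  obtain x E where xE: "x \<in> X" "E \<in> box_structure X I" "X \<subseteq> E `` {x}"
    using assms unfolding bounded_in_def by blast
  then obtain C where "C \<in> I" "E \<subseteq> Id_on X \<union> C \<times> C"
    unfolding box_structure_def by blast
  with xE have "X \<subseteq> insert x C" by blast
  with xE(1) \<open>C \<in> I\<close> show thesis by (rule that)
qed

locale coarse_space =
  fixes X :: "'a set" and Es :: "('a \<times> 'a) set set"
  assumes coarse: "coarse_structure X Es"
begin

abbreviation bounded :: "'a set \<Rightarrow> bool" where
  "bounded \<equiv> bounded_in X Es"

abbreviation large :: "'a set \<Rightarrow> bool" where
  "large \<equiv> large_in X Es"

text \<open>Projections taken by hand: with the closure of \<open>Es\<close> under subsets among its premises,
  \<open>simp\<close> and \<open>blast\<close> loop on the unfolded definition.\<close>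
lemmas coarse_structureD =
  coarse[unfolded coarse_structure_def, THEN conjunct1]
  coarse[unfolded coarse_structure_def, THEN conjunct2, THEN conjunct1]
  coarse[unfolded coarse_structure_def, THEN conjunct2, THEN conjunct2, THEN conjunct1]
  coarse[unfolded coarse_structure_def, THEN conjunct2, THEN conjunct2, THEN conjunct2, THEN conjunct1]
  coarse[unfolded coarse_structure_def, THEN conjunct2, THEN conjunct2, THEN conjunct2, THEN conjunct2]

lemma entourage_refl: "E \<in> Es \<Longrightarrow> Id_on X \<subseteq> E"
  and entourage_subset: "E \<in> Es \<Longrightarrow> E \<subseteq> X \<times> X"
  using coarse_structureD(1) by blast+

lemma entourage_relcomp: "E \<in> Es \<Longrightarrow> F \<in> Es \<Longrightarrow> E O F \<in> Es"
  using coarse_structureD(2) by blast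

lemma entourage_converse: "E \<in> Es \<Longrightarrow> E\<inverse> \<in> Es"
  using coarse_structureD(3) by blast

lemma entourage_mono: "E \<in> Es \<Longrightarrow> Id_on X \<subseteq> F \<Longrightarrow> F \<subseteq> E \<Longrightarrow> F \<in> Es"
  using coarse_structureD(4) by blast

lemma entourage_cover:
  assumes "a \<in> X" "b \<in> X"
  shows "\<exists>E\<in>Es. (a, b) \<in> E"
proof -
  from assms have "(a, b) \<in> \<Union>Es" by (simp add: coarse_structureD(5))
  then show ?thesis by (rule UnionE) blast
qed

lemma bounded_subset_space: "bounded Y \<Longrightarrow> Y \<subseteq> X"
  unfolding bounded_in_def using entourage_subset by blast

lemma bounded_singleton:
  assumes "x \<in> X"
  shows "bounded {x}"
proof -
  obtain E where "E \<in> Es" "(x, x) \<in> E" using entourage_cover[OF assms assms] ..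
  then show ?thesis using assms unfolding bounded_in_def by blast
qed

lemma bounded_empty: "X \<noteq> {} \<Longrightarrow> bounded {}"
  using bounded_singleton bounded_in_subset by blast

lemma entourage_subset_relcomp:
  assumes "E \<in> Es" "F \<in> Es"
  shows "E \<subseteq> E O F" "F \<subseteq> E O F"
proof -
  have "(b, b) \<in> F" if "(a, b) \<in> E" for a b
    using that entourage_subset[OF assms(1)] entourage_refl[OF assms(2)] by blast
  then show "E \<subseteq> E O F" by (auto intro: relcompI)
  have "(a, a) \<in> E" if "(a, b) \<in> F" for a b
    using that entourage_subset[OF assms(2)] entourage_refl[OF assms(1)] by blast
  then show "F \<subseteq> E O F" by (auto intro: relcompI)
qed

lemma bounded_Un:
  assumes "bounded A" "bounded B"
  shows "bounded (A \<union> B)"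
proof -
  obtain x E where x: "x \<in> X" "E \<in> Es" "A \<subseteq> E `` {x}"
    using assms(1) unfolding bounded_in_def by blast
  obtain y F where y: "y \<in> X" "F \<in> Es" "B \<subseteq> F `` {y}"
    using assms(2) unfolding bounded_in_def by blast
  obtain H where H: "H \<in> Es" "(x, y) \<in> H"
    using entourage_cover[OF x(1) y(1)] ..
  have HF: "H O F \<in> Es" using H(1) y(2) by (rule entourage_relcomp)
  have "A \<subseteq> (E O (H O F)) `` {x}"
    using x(3) entourage_subset_relcomp(1)[OF x(2) HF] by blast
  moreover have "B \<subseteq> (E O (H O F)) `` {x}"
    using y(3) H(2) entourage_subset_relcomp(2)[OF x(2) HF] by blast
  ultimately have "A \<union> B \<subseteq> (E O (H O F)) `` {x}" by blast
  with x(1) entourage_relcomp[OF x(2) HF] show ?thesis unfolding bounded_in_def by blast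
qed

lemma bounded_Image:
  assumes "bounded A" "E \<in> Es"
  shows "bounded (E `` A)"
proof -
  obtain x F where "x \<in> X" "F \<in> Es" "A \<subseteq> F `` {x}"
    using assms(1) unfolding bounded_in_def by blast
  then have "E `` A \<subseteq> (F O E) `` {x}" by blast
  then show ?thesis
    using \<open>x \<in> X\<close> entourage_relcomp[OF \<open>F \<in> Es\<close> assms(2)] unfolding bounded_in_def by blast
qed

lemma box_entourage:
  assumes "bounded C"
  shows "Id_on X \<union> C \<times> C \<in> Es"
proof -
  obtain x F where x: "x \<in> X" "F \<in> Es" "C \<subseteq> F `` {x}"
    using assms unfolding bounded_in_def by blast
  have "Id_on X \<union> C \<times> C \<subseteq> F\<inverse> O F"
    using x(3) entourage_refl[OF x(2)] by blast
  then show ?thesis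
    using entourage_mono[OF entourage_relcomp[OF entourage_converse[OF x(2)] x(2)]] by blast
qed

lemma bounded_if_box_entourage:
  assumes "Id_on X \<union> S \<times> S \<in> Es" "s \<in> S"
  shows "bounded S"
proof -
  have "S \<subseteq> (Id_on X \<union> S \<times> S) `` {s}" using assms(2) by blast
  moreover have "s \<in> X" using entourage_subset[OF assms(1)] assms(2) by blast
  ultimately show ?thesis using assms(1) unfolding bounded_in_def by blast
qed

lemma entourage_if_bounded_displaced:
  assumes "Id_on X \<subseteq> G" "G \<subseteq> X \<times> X" "bounded (displaced G \<union> G `` displaced G)"
  shows "G \<in> Es"
  using entourage_mono[OF box_entourage[OF assms(3)] assms(1)] subset_Id_on_Un_displaced[OF assms(2)] .

lemma discrete_ballean_iff_bounded_displaced: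
  "discrete_ballean X Es \<longleftrightarrow> (\<forall>E\<in>Es. bounded (displaced E))"
proof
  assume discrete: "discrete_ballean X Es"
  show "\<forall>E\<in>Es. bounded (displaced E)"
  proof
    fix E assume "E \<in> Es"
    then obtain B where "bounded B" "\<forall>x\<in>X - B. E `` {x} = {x}"
      using discrete unfolding discrete_ballean_def by blast
    moreover have "displaced E \<subseteq> X" using entourage_subset[OF \<open>E \<in> Es\<close>] by (auto simp: displaced_def)
    ultimately have "displaced E \<subseteq> B" by (auto simp: displaced_def)
    then show "bounded (displaced E)" using \<open>bounded B\<close> bounded_in_subset by blast
  qed
next
  assume "\<forall>E\<in>Es. bounded (displaced E)"
  moreover have "E `` {x} = {x}" if "E \<in> Es" "x \<in> X - displaced E" for E x
    using that entourage_refl[OF that(1)] by (auto simp: displaced_def)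
  ultimately show "discrete_ballean X Es" unfolding discrete_ballean_def by blast
qed

lemma large_if_cobounded:
  assumes "A \<subseteq> X" "a \<in> A" "bounded (X - A)"
  shows "large A"
proof -
  have "bounded (insert a (X - A))"
    using bounded_Un[OF bounded_singleton assms(3)] assms(1,2) by auto
  then have "Id_on X \<union> insert a (X - A) \<times> insert a (X - A) \<in> Es" by (rule box_entourage)
  moreover have "(Id_on X \<union> insert a (X - A) \<times> insert a (X - A)) `` A = X"
    using assms(1,2) by blast
  ultimately show ?thesis using assms(1) unfolding large_in_def by blast
qed

lemma ideal_on_bounded_trace: "ideal_on X {C. C \<subseteq> X \<and> bounded (C \<inter> Z)}"
  unfolding ideal_on_def
proof (intro conjI ballI allI impI)
  show "{C. C \<subseteq> X \<and> bounded (C \<inter> Z)} \<subseteq> Pow X" by blast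
next
  fix x assume "x \<in> X"
  moreover have "bounded ({x} \<inter> Z)"
    by (rule bounded_in_subset[OF bounded_singleton[OF \<open>x \<in> X\<close>]]) blast
  ultimately show "{x} \<in> {C. C \<subseteq> X \<and> bounded (C \<inter> Z)}" by simp
next
  fix A B assume "A \<in> {C. C \<subseteq> X \<and> bounded (C \<inter> Z)}" "B \<in> {C. C \<subseteq> X \<and> bounded (C \<inter> Z)}"
  then have "A \<union> B \<subseteq> X" "bounded (A \<inter> Z \<union> B \<inter> Z)" by (simp_all add: bounded_Un)
  then show "A \<union> B \<in> {C. C \<subseteq> X \<and> bounded (C \<inter> Z)}" by (simp add: Int_Un_distrib2)
next
  fix A B assume A: "A \<in> {C. C \<subseteq> X \<and> bounded (C \<inter> Z)}" and "B \<subseteq> A"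
  then have "bounded (B \<inter> Z)" by (blast intro: bounded_in_subset)
  with A \<open>B \<subseteq> A\<close> show "B \<in> {C. C \<subseteq> X \<and> bounded (C \<inter> Z)}" by auto
qed

lemma bounded_or_cobounded_if_ultradiscrete:
  assumes "ultradiscrete X Es"
  shows "bounded_or_cobounded X Es"
  unfolding bounded_or_cobounded_def
proof (intro allI impI)
  fix S assume S: "S \<subseteq> X"
  then have "S \<in> {X - B | B. bounded B} \<or> X - S \<in> {X - B | B. bounded B}"
    using assms unfolding ultradiscrete_def ultrafilter_on_def by blast
  then show "bounded S \<or> bounded (X - S)"
  proof
    assume "S \<in> {X - B | B. bounded B}"
    then obtain B where "bounded B" "S = X - B" by blast
    moreover from this have "X - S = B" using bounded_subset_space by blast
    ultimately show ?thesis by simp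
  next
    assume "X - S \<in> {X - B | B. bounded B}"
    then obtain B where "bounded B" "X - S = X - B" by blast
    moreover from this have "S = B" using S bounded_subset_space by blast
    ultimately show ?thesis by simp
  qed
qed

lemma bounded_in_superstructure_iff:
  assumes "bounded_or_cobounded X Es" "coarse_structure X Es'" "Es \<subseteq> Es'"
    and "\<not> bounded_in X Es' X"
  shows "bounded_in X Es' S \<longleftrightarrow> bounded S"
proof
  interpret super: coarse_space X Es' by (fact coarse_space.intro[OF assms(2)])
  assume S: "bounded_in X Es' S"
  show "bounded S"
  proof (rule ccontr)
    assume "\<not> bounded S"
    moreover have "S \<subseteq> X" using S by (rule super.bounded_subset_space)
    ultimately have "bounded (X - S)"
      using assms(1) unfolding bounded_or_cobounded_def by blast
    then have "bounded_in X Es' (X - S)" using assms(3) unfolding bounded_in_def by blast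
    with S have "bounded_in X Es' (S \<union> (X - S))" by (rule super.bounded_Un)
    with \<open>S \<subseteq> X\<close> assms(4) show False by (simp add: Un_Diff_cancel2 sup.absorb2)
  qed
next
  show "bounded S \<Longrightarrow> bounded_in X Es' S" using assms(3) unfolding bounded_in_def by blast
qed

lemma bounded_displaced_if_sym:
  assumes "bounded_or_cobounded X Es" "G \<subseteq> X \<times> X" "sym G"
    and "\<And>A. bounded A \<Longrightarrow> bounded (G `` A)"
  shows "bounded (displaced G)"
proof -
  obtain I where I: "I \<subseteq> displaced G" "displaced G - I \<subseteq> G `` I" "I \<subseteq> G `` (displaced G - I)"
    using sym_displaced_mutually_dominating_split[OF assms(3)] .
  have displaced_space: "displaced G \<subseteq> X"
    using assms(2) unfolding displaced_def by blast
  have "bounded I \<or> bounded (displaced G - I)"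
  proof (cases "bounded I")
    case False
    moreover have "I \<subseteq> X" using I(1) displaced_space by (rule order_trans)
    ultimately have "bounded (X - I)"
      using assms(1) unfolding bounded_or_cobounded_def by blast
    moreover have "displaced G - I \<subseteq> X - I" using displaced_space by blast
    ultimately show ?thesis by (blast intro: bounded_in_subset)
  qed simp
  then have "bounded I" "bounded (displaced G - I)"
    using bounded_in_subset[OF assms(4) I(2)] bounded_in_subset[OF assms(4) I(3)] by blast+
  then have "bounded (I \<union> (displaced G - I))" by (rule bounded_Un)
  moreover have "I \<union> (displaced G - I) = displaced G" using I(1) by blast
  ultimately show ?thesis by simp
qed

lemma maximal_if_bounded_or_cobounded:
  assumes dichotomy: "bounded_or_cobounded X Es"
  shows "maximal_ballean X Es"
  unfolding maximal_ballean_def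
proof (intro allI impI)
  fix Es' assume "coarse_structure X Es' \<and> Es \<subset> Es'"
  then have coarse': "coarse_structure X Es'" and "Es \<subseteq> Es'" and "Es' \<noteq> Es" by blast+
  interpret super: coarse_space X Es' by (fact coarse_space.intro[OF coarse'])
  obtain F where F: "F \<in> Es'" "F \<notin> Es" using \<open>Es \<subseteq> Es'\<close> \<open>Es' \<noteq> Es\<close> by blast
  show "bounded_in X Es' X"
  proof (rule ccontr)
    assume "\<not> bounded_in X Es' X"
    note same_bounded = bounded_in_superstructure_iff[OF dichotomy coarse' \<open>Es \<subseteq> Es'\<close> this]
    define G where "G = F O F\<inverse>"
    have G: "G \<in> Es'"
      unfolding G_def using super.entourage_relcomp[OF F(1) super.entourage_converse[OF F(1)]] .
    have G_bounded: "bounded (G `` A)" if "bounded A" for A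
      using super.bounded_Image[of A G] G that same_bounded by blast
    have "sym G" unfolding G_def sym_def by blast
    then have "bounded (displaced G)"
      using bounded_displaced_if_sym[OF dichotomy super.entourage_subset[OF G]] G_bounded by blast
    then have "bounded (displaced G \<union> G `` displaced G)"
      using G_bounded bounded_Un by blast
    then have "G \<in> Es"
      using entourage_if_bounded_displaced super.entourage_refl[OF G] super.entourage_subset[OF G] by blast
    moreover have "F \<subseteq> G"
      unfolding G_def using super.entourage_subset_relcomp(1)[OF F(1) super.entourage_converse[OF F(1)]] .
    ultimately show False
      using F entourage_mono super.entourage_refl[OF F(1)] by blast
  qed
qed

lemma ultranormal_if_bounded_or_cobounded:
  assumes "bounded_or_cobounded X Es" "unbounded_ballean X Es"
  shows "ultranormal X Es"
  unfolding ultranormal_def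
proof (intro conjI allI impI notI)
  show "unbounded_ballean X Es" by (fact assms(2))
  fix Y Z assume YZ: "Y \<subseteq> X \<and> Z \<subseteq> X \<and> \<not> bounded Y \<and> \<not> bounded Z"
    and "asymp_disjoint X Es Y Z"
  have "bounded (X - Y)" using YZ assms(1) unfolding bounded_or_cobounded_def by blast
  obtain x where "x \<in> X" using bounded_or_cobounded_nonempty[OF assms(1)] by blast
  then obtain E where "E \<in> Es" using entourage_cover by blast
  then have "bounded (E `` Y \<inter> E `` Z)"
    using \<open>asymp_disjoint X Es Y Z\<close> unfolding asymp_disjoint_def by blast
  then have "bounded ((E `` Y \<inter> E `` Z) \<union> (X - Y))"
    using \<open>bounded (X - Y)\<close> by (rule bounded_Un)
  moreover have "Z \<subseteq> (E `` Y \<inter> E `` Z) \<union> (X - Y)"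
    using YZ entourage_refl[OF \<open>E \<in> Es\<close>] by blast
  ultimately show False using YZ bounded_in_subset by blast
qed

end

locale discrete_coarse_space = coarse_space +
  assumes discrete: "discrete_ballean X Es"
begin

lemma bounded_displaced: "E \<in> Es \<Longrightarrow> bounded (displaced E)"
  using discrete unfolding discrete_ballean_iff_bounded_displaced by blast

lemma entourage_subset_box:
  assumes "E \<in> Es"
  obtains C where "bounded C" "E \<subseteq> Id_on X \<union> C \<times> C"
proof
  show "bounded (displaced E \<union> E `` displaced E)"
    using bounded_displaced[OF assms] bounded_Image[OF _ assms] by (blast intro: bounded_Un)
  show "E \<subseteq> Id_on X \<union> (displaced E \<union> E `` displaced E) \<times> (displaced E \<union> E `` displaced E)"
    using entourage_subset[OF assms] by (rule subset_Id_on_Un_displaced)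
qed

lemma cobounded_if_large:
  assumes "large A"
  shows "bounded (X - A)"
proof -
  obtain E where E: "E \<in> Es" "X = E `` A" using assms unfolding large_in_def by blast
  have "X - A \<subseteq> E `` displaced E"
  proof
    fix y assume y: "y \<in> X - A"
    then obtain a where "a \<in> A" "(a, y) \<in> E" using E(2) by blast
    moreover from this y have "a \<in> displaced E" unfolding displaced_def by blast
    ultimately show "y \<in> E `` displaced E" by blast
  qed
  then show ?thesis using bounded_Image[OF bounded_displaced[OF E(1)] E(1)] bounded_in_subset by blast
qed

lemma asymp_disjoint_Diff: "asymp_disjoint X Es S (X - S)"
  unfolding asymp_disjoint_def
proof
  fix E assume "E \<in> Es"
  then obtain C where C: "bounded C" "E \<subseteq> Id_on X \<union> C \<times> C" by (rule entourage_subset_box)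
  then have "E `` S \<inter> E `` (X - S) \<subseteq> C" by blast
  with C(1) show "bounded (E `` S \<inter> E `` (X - S))" by (rule bounded_in_subset)
qed

lemma irresolvable:
  assumes "unbounded_ballean X Es"
  shows "irresolvable X Es"
  unfolding irresolvable_def
proof
  assume "\<exists>A B. A \<inter> B = {} \<and> A \<union> B = X \<and> large A \<and> large B"
  then obtain A B where "A \<inter> B = {}" "large A" "large B" by blast
  then have "bounded ((X - A) \<union> (X - B))" "(X - A) \<union> (X - B) = X"
    using bounded_Un[OF cobounded_if_large cobounded_if_large] by blast+
  with assms show False unfolding unbounded_ballean_def by simp
qed

lemma nonempty_if_maximal:
  assumes "maximal_ballean X Es"
  shows "X \<noteq> {}"
proof
  assume "X = {}"
  then have "Es = {}" using bounded_displaced unfolding bounded_in_def by blast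
  moreover have "coarse_structure X {{}}" unfolding \<open>X = {}\<close> coarse_structure_def by simp
  ultimately have "bounded_in X {{}} X" using assms unfolding maximal_ballean_def by blast
  with \<open>X = {}\<close> show False unfolding bounded_in_def by blast
qed

lemma bounded_or_cobounded_if_maximal:
  assumes "maximal_ballean X Es"
  shows "bounded_or_cobounded X Es"
  unfolding bounded_or_cobounded_def
proof (intro allI impI)
  fix S assume "S \<subseteq> X"
  show "bounded S \<or> bounded (X - S)"
  proof (rule ccontr)
    assume "\<not> (bounded S \<or> bounded (X - S))"
    then have S: "\<not> bounded S" and Z: "\<not> bounded (X - S)" by auto
    have empty: "bounded {}" by (rule bounded_empty[OF nonempty_if_maximal[OF assms]])
    then obtain s where "s \<in> S" using S by (cases "S = {}") auto
    define I where "I = {C. C \<subseteq> X \<and> bounded (C \<inter> (X - S))}"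
    have "Es \<subseteq> box_structure X I"
    proof
      fix E assume "E \<in> Es"
      then obtain C where C: "bounded C" "E \<subseteq> Id_on X \<union> C \<times> C" by (rule entourage_subset_box)
      have "C \<in> I"
        unfolding I_def using bounded_subset_space[OF C(1)] bounded_in_subset[OF C(1), of "C \<inter> (X - S)"]
        by blast
      with C(2) show "E \<in> box_structure X I"
        unfolding box_structure_def using entourage_refl[OF \<open>E \<in> Es\<close>] by blast
    qed
    moreover have "Id_on X \<union> S \<times> S \<notin> Es"
      using S \<open>s \<in> S\<close> bounded_if_box_entourage by blast
    moreover have "S \<in> I"
      unfolding I_def using \<open>S \<subseteq> X\<close> empty by (simp add: Int_Diff)
    then have "Id_on X \<union> S \<times> S \<in> box_structure X I"
      unfolding box_structure_def by blast
    ultimately have "Es \<subset> box_structure X I" by blast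
    moreover have "coarse_structure X (box_structure X I)"
      unfolding I_def by (rule coarse_structure_box_structure[OF ideal_on_bounded_trace])
    ultimately have "bounded_in X (box_structure X I) X"
      using assms unfolding maximal_ballean_def by blast
    then obtain x C where "x \<in> X" "C \<in> I" "X \<subseteq> insert x C"
      by (rule bounded_in_box_structure_space)
    then have "X - S \<subseteq> {x} \<union> C \<inter> (X - S)" and "bounded ({x} \<union> C \<inter> (X - S))"
      unfolding I_def using bounded_Un[OF bounded_singleton] by blast+
    then have "bounded (X - S)" by (rule_tac bounded_in_subset)
    with Z show False ..
  qed
qed

lemma ultradiscrete_iff_bounded_or_cobounded:
  assumes unbounded: "unbounded_ballean X Es"
  shows "ultradiscrete X Es \<longleftrightarrow> bounded_or_cobounded X Es"
proof
  assume dichotomy: "bounded_or_cobounded X Es"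
  let ?F = "{X - B | B. bounded B}"
  have "ultrafilter_on X ?F"
    unfolding ultrafilter_on_def
  proof (intro conjI ballI allI impI)
    show "?F \<subseteq> Pow X" by blast
    show "X \<in> ?F"
      using bounded_empty[OF bounded_or_cobounded_nonempty[OF dichotomy]] by force
    show "{} \<notin> ?F"
    proof
      assume "{} \<in> ?F"
      then obtain B where "bounded B" "X \<subseteq> B" by auto
      with unbounded show False unfolding unbounded_ballean_def by (blast intro: bounded_in_subset)
    qed
  next
    fix A B assume "A \<in> ?F" "B \<in> ?F"
    then obtain A' B' where "bounded A'" "A = X - A'" "bounded B'" "B = X - B'" by blast
    then have "bounded (A' \<union> B')" "A \<inter> B = X - (A' \<union> B')" by (auto intro: bounded_Un)
    then show "A \<inter> B \<in> ?F" by blast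
  next
    fix A B assume "A \<in> ?F" "A \<subseteq> B \<and> B \<subseteq> X"
    then obtain A' where "bounded A'" "X - A' \<subseteq> B" "B \<subseteq> X" by blast
    then have "bounded (X - B)" "B = X - (X - B)" by (auto intro: bounded_in_subset)
    then show "B \<in> ?F" by blast
  next
    fix A assume "A \<subseteq> X"
    then have "bounded A \<or> bounded (X - A)"
      using dichotomy unfolding bounded_or_cobounded_def by blast
    moreover have "X - (X - A) = A" using \<open>A \<subseteq> X\<close> by blast
    ultimately show "A \<in> ?F \<or> X - A \<in> ?F" by blast
  qed
  with unbounded discrete show "ultradiscrete X Es" unfolding ultradiscrete_def by blast
qed (fact bounded_or_cobounded_if_ultradiscrete)

lemma extremely_normal_iff_bounded_or_cobounded:
  assumes unbounded: "unbounded_ballean X Es"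
  shows "extremely_normal X Es \<longleftrightarrow> bounded_or_cobounded X Es"
proof
  assume "extremely_normal X Es"
  then show "bounded_or_cobounded X Es"
    unfolding extremely_normal_def bounded_or_cobounded_def using cobounded_if_large by blast
next
  assume dichotomy: "bounded_or_cobounded X Es"
  have "large Y" if "Y \<subseteq> X" "\<not> bounded Y" for Y
  proof -
    have "Y \<noteq> {}"
      using that(2) bounded_empty[OF bounded_or_cobounded_nonempty[OF dichotomy]] by auto
    then obtain y where "y \<in> Y" by blast
    moreover have "bounded (X - Y)" using that dichotomy unfolding bounded_or_cobounded_def by blast
    ultimately show "large Y" using large_if_cobounded[OF \<open>Y \<subseteq> X\<close>] by blast
  qed
  with unbounded show "extremely_normal X Es" unfolding extremely_normal_def by blast
qed

lemma ultranormal_iff_bounded_or_cobounded: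
  assumes "unbounded_ballean X Es"
  shows "ultranormal X Es \<longleftrightarrow> bounded_or_cobounded X Es"
proof
  assume "ultranormal X Es"
  then show "bounded_or_cobounded X Es"
    unfolding ultranormal_def bounded_or_cobounded_def using asymp_disjoint_Diff by blast
qed (use assms ultranormal_if_bounded_or_cobounded in blast)

lemma maximal_iff_bounded_or_cobounded: "maximal_ballean X Es \<longleftrightarrow> bounded_or_cobounded X Es"
  using bounded_or_cobounded_if_maximal maximal_if_bounded_or_cobounded by blast

end

theorem theorem2:
  fixes X :: "'a set" and Es :: "('a \<times> 'a) set set"
  assumes "coarse_structure X Es"
    and "unbounded_ballean X Es"
    and "discrete_ballean X Es"
  shows "(ultradiscrete X Es \<longleftrightarrow> extremely_normal X Es)
       \<and> (extremely_normal X Es \<longleftrightarrow> ultranormal X Es)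
       \<and> (ultranormal X Es \<longleftrightarrow> maximal_ballean X Es \<and> irresolvable X Es)"
proof -
  interpret discrete_coarse_space X Es
    by unfold_locales (fact assms(1), fact assms(3))
  show ?thesis
    using ultradiscrete_iff_bounded_or_cobounded[OF assms(2)]
      extremely_normal_iff_bounded_or_cobounded[OF assms(2)]
      ultranormal_iff_bounded_or_cobounded[OF assms(2)]
      maximal_iff_bounded_or_cobounded irresolvable[OF assms(2)]
    by blast
qed

end
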